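(* Fix $P_L$ to be either the Alexander polynomial of $L$ for every link $L$, or the Jones polynomial of $L$ for every link $L$. For integers $t,n$, the set $X'_{t,n}$ equals the set of all isotopy classes of links $L$ of braid index three such that $e(L)=n$ and $P_L(-1)=i^n(t-2)$.
   Context: $B_3=\langle\sigma_1,\sigma_2:\sigma_1\sigma_2\sigma_1=\sigma_2\sigma_1\sigma_2\rangle$; $\phi:B_3\to\mathrm{SL}_2(\mathbb{Z})$ is given by $\phi(\sigma_1)=\begin{bmatrix}1&1\\0&1\end{bmatrix}$, $\phi(\sigma_2)=\begin{bmatrix}1&0\\-1&1\end{bmatrix}$; $\epsilon:B_3\to\mathbb{Z}$ is the exponent sum. For a link $L$ of braid index three, $e(L)$ is the writhe of the closure diagram of any $g\in B_3$ with closure $L$ (i.e. $\epsilon(g)$), which depends only on $L$. $X'_{t,n}$ is the set of isotopy classes of links $L$ of braid index three such that $e(L)=n$ and $i^{\epsilon(g)}(\mathrm{tr}(\phi(g))-2)=i^n(t-2)$ for a (equivalently any) $g\in B_3$ with closure $L$; here $i=\sqrt{-1}$. The Alexander polynomial $\Delta_L$ and Jones polynomial $V_L$ are normalized as in Jones (Ann. of Math. 1987): with $\beta_3$ the reduced Burau representation $\beta_3(\sigma_1)=\begin{bmatrix}1&-q\\0&-q\end{bmatrix}$, $\beta_3(\sigma_2)=\begin{bmatrix}-q&0\\-1&1\end{bmatrix}$, the closure $\overline g$ of $g\in B_3$ satisfies $\Delta_{\overline g}(q)=\left(-\tfrac{1}{\sqrt q}\right)^{\epsilon(g)-2}\frac{1-\mathrm{tr}(\beta_3(g))+(-q)^{\epsilon(g)}}{1+q+q^2}$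 and $V_{\overline g}(q)=\sqrt{q}^{\,\epsilon(g)}\left(q+q^{-1}+\mathrm{tr}(\beta_3(g))\right)$; $P_L(-1)$ denotes evaluation at $q=-1$ with $\sqrt q=i$. *)

theory Defs
  imports "HOL-Analysis.Analysis"
begin

text \<open>Braid words in B_3: letters are (generator, sign); True = sigma_i, False = sigma_i^-1.
  Every element of B_3 is represented by such a word; all invariants below are
  defined letter-wise via group homomorphisms, hence depend only on the group element.\<close>

datatype gen = S1 | S2

type_synonym bword = "(gen \<times> bool) list"

definition mat2 :: "'a \<Rightarrow> 'a \<Rightarrow> 'a \<Rightarrow> 'a \<Rightarrow> 'a::zero^2^2" where
  "mat2 a b c d = vector [vector [a, b], vector [c, d]]"

definition tr2 :: "'a::comm_ring_1^2^2 \<Rightarrow> 'a" where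
  "tr2 A = A$1$1 + A$2$2"

definition eps :: "bword \<Rightarrow> int" where
  "eps w = sum_list (map (\<lambda>(_, b). if b then 1 else -1) w)"

fun phi_letter :: "gen \<times> bool \<Rightarrow> complex^2^2" where
  "phi_letter (S1, True) = mat2 1 1 0 1"
| "phi_letter (S1, False) = mat2 1 (-1) 0 1"
| "phi_letter (S2, True) = mat2 1 0 (-1) 1"
| "phi_letter (S2, False) = mat2 1 0 1 1"

definition phi :: "bword \<Rightarrow> complex^2^2" where
  "phi w = foldr (\<lambda>l M. phi_letter l ** M) w (mat 1)"

fun burau_letter :: "complex \<Rightarrow> gen \<times> bool \<Rightarrow> complex^2^2" where
  "burau_letter q (S1, True) = mat2 1 (-q) 0 (-q)"
| "burau_letter q (S1, False) = mat2 1 (-1) 0 (-1/q)"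
| "burau_letter q (S2, True) = mat2 (-q) 0 (-1) 1"
| "burau_letter q (S2, False) = mat2 (-1/q) 0 (-1/q) 1"

definition burau :: "complex \<Rightarrow> bword \<Rightarrow> complex^2^2" where
  "burau q w = foldr (\<lambda>l M. burau_letter q l ** M) w (mat 1)"

text \<open>Alexander and Jones polynomials of the closure of w, evaluated at q with
  the chosen square root s of q (Jones' normalization).\<close>
definition alexander_at :: "bword \<Rightarrow> complex \<Rightarrow> complex \<Rightarrow> complex" where
  "alexander_at w q s = (- 1 / s) powi (eps w - 2) *
     ((1 - tr2 (burau q w) + (- q) powi eps w) / (1 + q + q^2))"

definition jones_at :: "bword \<Rightarrow> complex \<Rightarrow> complex \<Rightarrow> complex" where
  "jones_at w q s = s powi eps w * (q + inverse q + tr2 (burau q w))"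

definition Xprime :: "int \<Rightarrow> int \<Rightarrow> bword set" where
  "Xprime t n = {w. eps w = n \<and>
     \<i> powi eps w * (tr2 (phi w) - 2) = \<i> powi n * (of_int t - 2)}"

end

theory Submission
  imports Defs
begin

text \<open>At \<open>q = -1\<close> the reduced Burau matrices of the generators specialise to their
  images under \<open>\<phi>\<close>, so \<open>tr \<beta>\<^sub>3(g) = tr \<phi>(g)\<close>. With \<open>\<surd>q = \<i>\<close>, \<open>1 + q + q\<^sup>2 = 1\<close> and
  \<open>(-q)\<^bsup>\<epsilon>\<^esup> = 1\<close>, both the Alexander and the Jones polynomial of the closure of \<open>g\<close>
  evaluate at \<open>-1\<close> to \<open>\<i>\<^bsup>\<epsilon>(g)\<^esup> (tr \<phi>(g) - 2)\<close>, which is the quantity defining \<open>X'\<^sub>t\<^sub>,\<^sub>n\<close>.\<close>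

lemma burau_letter_minus_one: "burau_letter (-1) l = phi_letter l"
  by (cases l rule: phi_letter.cases) auto

lemma burau_minus_one: "burau (-1) w = phi w"
  unfolding burau_def phi_def by (simp add: burau_letter_minus_one)

lemma imaginary_unit_powi_minus_two: "\<i> powi (e - 2) = - (\<i> powi e)"
proof -
  have "\<i> powi (e - 2) = \<i> powi e / \<i> powi 2"
    by (simp add: power_int_diff)
  also have "\<i> powi 2 = -1"
    by (simp add: power_int_def)
  finally show ?thesis
    by simp
qed

lemma alexander_at_minus_one: "alexander_at w (-1) \<i> = \<i> powi eps w * (tr2 (phi w) - 2)"
proof -
  have sqrt_factor: "- 1 / \<i> = \<i>"
    by (simp add: field_simps)
  have sign_factor: "(- (-1)) powi e = (1::complex)" for e
    by simp
  show ?thesis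
    unfolding alexander_at_def burau_minus_one sqrt_factor sign_factor
      imaginary_unit_powi_minus_two
    by (simp add: algebra_simps)
qed

lemma jones_at_minus_one: "jones_at w (-1) \<i> = \<i> powi eps w * (tr2 (phi w) - 2)"
  unfolding jones_at_def burau_minus_one by (simp add: algebra_simps)

theorem lemma5p1:
  fixes t n :: int
  shows "Xprime t n = {w. eps w = n \<and> alexander_at w (-1) \<i> = \<i> powi n * (of_int t - 2)}
       \<and> Xprime t n = {w. eps w = n \<and> jones_at w (-1) \<i> = \<i> powi n * (of_int t - 2)}"
  unfolding Xprime_def alexander_at_minus_one jones_at_minus_one by simp

end
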